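(* Let $n$ and $r$ be sufficiently large integers with $\log\log n\ll r\le 0.01\log^{1/2}n/\log\log n$ (i.e., $r/\log\log n\to\infty$), and let $\mathcal{H}=\mathcal{H}(n,r,r)$. If $T\subseteq V(\mathcal{H})$ satisfies $|T|\ge 0.1\,v(\mathcal{H})=0.1\,n^r$, then $$e(\mathcal{H}[T])\ge \frac{n^{2r}}{10^{r+2}\,2^{3r^2+3r}\,(r+1)!\,\log n}\ge 10^{-r^2}\,e(\mathcal{H}).$$
   Context: Logarithms are to base 2. $\mathcal{H}(n,r,r)$ is the $r$-uniform hypergraph with vertex set $[n]^r$ whose edges are all $r$-element subsets of $[n]^r$ lying on a common line in $\mathbb{R}^r$. $v(\cdot)$ and $e(\cdot)$ denote numbers of vertices and edges, and $\mathcal{H}[T]$ is the subhypergraph induced by $T$ (edges contained in $T$). *)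

theory Defs
  imports Complex_Main
begin

text \<open>Points of [n]^r are represented as functions nat => nat that take values in
  {1..n} on the coordinates 0..r-1 and are 0 elsewhere (extensional encoding).\<close>

definition grid :: "nat \<Rightarrow> nat \<Rightarrow> (nat \<Rightarrow> nat) set" where
  "grid n r = {x. (\<forall>i<r. x i \<in> {1..n}) \<and> (\<forall>i\<ge>r. x i = 0)}"

definition on_common_line :: "nat \<Rightarrow> (nat \<Rightarrow> nat) set \<Rightarrow> bool" where
  "on_common_line r S \<longleftrightarrow>
     (\<exists>a d :: nat \<Rightarrow> real. (\<exists>i<r. d i \<noteq> 0) \<and>
        (\<forall>x\<in>S. \<exists>t::real. \<forall>i<r. real (x i) = a i + t * d i))"

definition Hedges :: "nat \<Rightarrow> nat \<Rightarrow> (nat \<Rightarrow> nat) set set" where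
  "Hedges n r = {S. S \<subseteq> grid n r \<and> card S = r \<and> on_common_line r S}"

definition induced_edges :: "nat \<Rightarrow> nat \<Rightarrow> (nat \<Rightarrow> nat) set \<Rightarrow> nat" where
  "induced_edges n r T = card {S \<in> Hedges n r. S \<subseteq> T}"

end

theory Submission
  imports Defs "HOL-Analysis.Harmonic_Numbers"
begin

text \<open>
  Every edge is u + K p with u a grid point, p a nonzero integer direction with
  max-norm m and K a set of r - 1 nonzero multiples of absolute value at most n / m. Summing
  n^r (2n/m)^(r-1) over all directions factorises coordinatewise, and the sum of 1 / max(|a|,1)
  over |a| \<le> n is 1 + 2 H_n = O(log n); hence e(H) \<le> (8 log n)^r n^(2r).

  Fix a direction d \<in> [N]^r, N \<approx> n / (1600 r^2), with coprime first two
  coordinates, and walk L = 40 r steps along d from every admissible base point x. Each walk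
  stays inside [n]^r; the i-th points of the walks are, up to a shift, all points of an inner
  cube which still contains half of T. So on average a walk meets T in L/20 = 2r points, and at
  least n^r / 40 walks meet T at least r times; any r of these points form an edge of H[T]. An
  edge determines its direction (by coprimality) and, up to L choices, its base point, so
  e(H[T]) \<ge> N^r n^r / (160 L).
\<close>

section \<open>Cubes of functions\<close>

definition cube :: "nat \<Rightarrow> 'a::zero set \<Rightarrow> (nat \<Rightarrow> 'a) set" where
  "cube r A = {p. (\<forall>i<r. p i \<in> A) \<and> (\<forall>i\<ge>r. p i = 0)}"

lemma cube_0: "cube 0 A = {\<lambda>_. 0}"
  unfolding cube_def by auto

lemma cube_Suc: "cube (Suc r) A = (\<lambda>(p,a). p(r:=a)) ` (cube r A \<times> A)"
proof (rule set_eqI, rule iffI)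
  fix x assume x: "x \<in> cube (Suc r) A"
  have "x = (\<lambda>(p,a). p(r:=a)) (x(r:=0), x r)" by auto
  moreover have "(x(r:=0), x r) \<in> cube r A \<times> A" using x unfolding cube_def by auto
  ultimately show "x \<in> (\<lambda>(p,a). p(r:=a)) ` (cube r A \<times> A)" by blast
next
  fix x assume "x \<in> (\<lambda>(p,a). p(r:=a)) ` (cube r A \<times> A)"
  then show "x \<in> cube (Suc r) A" unfolding cube_def by (auto simp: less_Suc_eq)
qed

lemma inj_on_cube_Suc: "inj_on (\<lambda>(p,a). p(r:=a)) (cube r A \<times> A)"
proof (rule inj_onI, clarify)
  fix p a q b assume p: "p \<in> cube r A" and q: "q \<in> cube r A" and e: "p(r:=a) = q(r:=b)"
  have "a = b" using fun_cong[OF e, of r] by simp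
  moreover have "p = q"
  proof
    fix i show "p i = q i"
      using fun_cong[OF e, of i] p q unfolding cube_def by (cases "i = r") auto
  qed
  ultimately show "p = q \<and> a = b" by simp
qed

lemma finite_cube: "finite A \<Longrightarrow> finite (cube r A)"
  by (induction r) (auto simp: cube_0 cube_Suc)

lemma sum_prod_cube:
  fixes f :: "'a::zero \<Rightarrow> 'b::comm_semiring_1"
  assumes "finite A"
  shows "(\<Sum>p\<in>cube r A. \<Prod>i<r. f (p i)) = (\<Sum>a\<in>A. f a) ^ r"
proof (induction r)
  case 0 then show ?case by (simp add: cube_0)
next
  case (Suc r)
  have "(\<Sum>p\<in>cube (Suc r) A. \<Prod>i<Suc r. f (p i))
      = (\<Sum>x\<in>cube r A \<times> A. (\<lambda>p. \<Prod>i<Suc r. f (p i)) ((\<lambda>(p,a). p(r:=a)) x))"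
    unfolding cube_Suc by (rule sum.reindex[OF inj_on_cube_Suc, unfolded comp_def])
  also have "\<dots> = (\<Sum>x\<in>cube r A \<times> A. (\<Prod>i<r. f (fst x i)) * f (snd x))"
    by (rule sum.cong) (auto simp: prod.lessThan_Suc intro!: prod.cong)
  also have "\<dots> = (\<Sum>p\<in>cube r A. \<Prod>i<r. f (p i)) * (\<Sum>a\<in>A. f a)"
    by (simp add: sum_product sum.cartesian_product split_beta)
  finally show ?case using Suc by (simp add: mult.commute)
qed

lemma card_cube: "finite A \<Longrightarrow> card (cube r A) = card A ^ r"
  using sum_prod_cube[of A "\<lambda>_. 1::nat" r] by simp

lemma grid_eq_cube: "grid n r = cube r {1..n}"
  unfolding grid_def cube_def by simp

lemma card_grid: "card (grid n r) = n ^ r"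
  by (simp add: grid_eq_cube card_cube)

lemma finite_grid: "finite (grid n r)"
  by (simp add: grid_eq_cube finite_cube)

lemma grid_eqI:
  assumes "x \<in> grid n r" "y \<in> grid n r" "\<And>i. i < r \<Longrightarrow> x i = y i"
  shows "x = y"
proof
  fix i show "x i = y i" using assms unfolding grid_def by (cases "i < r") auto
qed

section \<open>Collinear lattice points\<close>

lemma int_subgroup_generator:
  fixes G :: "int set"
  assumes closed: "\<And>a b q. a \<in> G \<Longrightarrow> b \<in> G \<Longrightarrow> a - q * b \<in> G"
    and "k \<in> G" "k \<noteq> 0"
  obtains g where "g > 0" "g \<in> G" "\<And>a. a \<in> G \<Longrightarrow> g dvd a"
proof -
  define P where "P m \<longleftrightarrow> 0 < m \<and> int m \<in> G" for m :: nat
  have "\<bar>k\<bar> \<in> G" using closed[OF \<open>k \<in> G\<close> \<open>k \<in> G\<close>, of "1 - sgn k"]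
    by (simp add: algebra_simps abs_sgn)
  then have "P (nat \<bar>k\<bar>)" using \<open>k \<noteq> 0\<close> unfolding P_def by simp
  then have least: "P (LEAST m. P m)" by (rule LeastI)
  define g where "g = int (LEAST m. P m)"
  have "g > 0" "g \<in> G" using least unfolding P_def g_def by auto
  moreover have "g dvd a" if "a \<in> G" for a
  proof (rule ccontr)
    assume "\<not> g dvd a"
    then have pos: "a mod g > 0" using \<open>g > 0\<close> by (simp add: dvd_eq_mod_eq_0 order_less_le)
    have "a mod g \<in> G" using closed[OF that \<open>g \<in> G\<close>, of "a div g"] by (simp add: minus_div_mult_eq_mod)
    then have "P (nat (a mod g))" unfolding P_def using pos by simp
    then have "(LEAST m. P m) \<le> nat (a mod g)" by (rule Least_le)
    then have "g \<le> a mod g" using pos unfolding g_def by (simp add: le_nat_iff)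
    moreover have "a mod g < g" using \<open>g > 0\<close> by simp
    ultimately show False by linarith
  qed
  ultimately show ?thesis using that by blast
qed

text \<open>
  Scale the direction so that coordinate i0 moves by one. The integer shifts k along coordinate
  i0 for which k times this direction is integral form a subgroup of the integers, whose
  generator g yields the lattice direction p.
\<close>
lemma collinear_lattice_points:
  assumes line: "on_common_line r S" and "u \<in> S" "v \<in> S" and uv: "\<exists>i<r. u i \<noteq> v i"
  obtains p :: "nat \<Rightarrow> int" and k
  where "\<forall>i\<ge>r. p i = 0" "\<exists>i<r. p i \<noteq> 0"
    "\<And>x i. x \<in> S \<Longrightarrow> i < r \<Longrightarrow> int (x i) = int (u i) + k x * p i"
proof -
  obtain a d where "\<exists>i<r. d i \<noteq> (0::real)"
    and "\<forall>x\<in>S. \<exists>t::real. \<forall>i<r. real (x i) = a i + t * d i"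
    using line unfolding on_common_line_def by blast
  then obtain i0 t where i0: "i0 < r" "d i0 \<noteq> 0"
    and t: "\<And>x i. x \<in> S \<Longrightarrow> i < r \<Longrightarrow> real (x i) = a i + t x * d i"
    by metis
  define \<delta> where "\<delta> x = int (x i0) - int (u i0)" for x :: "nat \<Rightarrow> nat"
  define \<rho> where "\<rho> j = d j / d i0" for j
  have diff: "real (x j) - real (u j) = real_of_int (\<delta> x) * \<rho> j" if "x \<in> S" "j < r" for x j
  proof -
    have "real (x j) - real (u j) = (t x - t u) * d i0 * (d j / d i0)"
      using t[OF that] t[OF \<open>u \<in> S\<close> that(2)] i0(2) by (simp add: algebra_simps)
    moreover have "real_of_int (\<delta> x) = (t x - t u) * d i0"
      using t[OF that(1) i0(1)] t[OF \<open>u \<in> S\<close> i0(1)] unfolding \<delta>_def by (simp add: algebra_simps)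
    ultimately show ?thesis unfolding \<rho>_def by simp
  qed
  define G where "G = {k::int. \<forall>j<r. real_of_int k * \<rho> j \<in> \<int>}"
  have closed: "a - q * b \<in> G" if "a \<in> G" "b \<in> G" for a b q
  proof -
    have "real_of_int (a - q * b) * \<rho> j \<in> \<int>" if "j < r" for j
    proof -
      have "real_of_int (a - q * b) * \<rho> j
          = real_of_int a * \<rho> j - real_of_int q * (real_of_int b * \<rho> j)"
        by (simp add: algebra_simps)
      then show ?thesis using \<open>a \<in> G\<close> \<open>b \<in> G\<close> \<open>j < r\<close> unfolding G_def by auto
    qed
    then show ?thesis unfolding G_def by blast
  qed
  have \<delta>G: "\<delta> x \<in> G" if "x \<in> S" for x
    unfolding G_def using diff[OF that, symmetric] by (auto intro: Ints_diff Ints_of_nat)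
  have "\<delta> v \<noteq> 0" using uv diff[OF \<open>v \<in> S\<close>] by fastforce
  then obtain g where g: "g > 0" "g \<in> G" and dvd: "\<And>k. k \<in> G \<Longrightarrow> g dvd k"
    using int_subgroup_generator[OF closed \<delta>G[OF \<open>v \<in> S\<close>]] by blast
  define p where "p j = (if j < r then \<lfloor>real_of_int g * \<rho> j\<rfloor> else 0)" for j
  have p: "real_of_int (p j) = real_of_int g * \<rho> j" if "j < r" for j
    using g(2) that unfolding G_def p_def by (auto elim: Ints_cases)
  have "p i0 = g" using p[OF i0(1)] i0(2) unfolding \<rho>_def by simp
  have coord: "int (x j) = int (u j) + \<delta> x div g * p j" if "x \<in> S" "j < r" for x j
  proof -
    have "\<delta> x = \<delta> x div g * g" using dvd[OF \<delta>G[OF \<open>x \<in> S\<close>]] by simp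
    then have "real (x j) - real (u j) = real_of_int (\<delta> x div g) * real_of_int (p j)"
      using diff[OF that] p[OF \<open>j < r\<close>] by (metis mult.assoc mult.commute of_int_mult)
    then have "real_of_int (int (x j)) = real_of_int (int (u j) + \<delta> x div g * p j)" by simp
    then show ?thesis by (simp only: of_int_eq_iff)
  qed
  show ?thesis
  proof (rule that[of p "\<lambda>x. \<delta> x div g"])
    show "\<forall>i\<ge>r. p i = 0" unfolding p_def by simp
    show "\<exists>i<r. p i \<noteq> 0" using i0(1) \<open>p i0 = g\<close> g(1) by auto
  qed (rule coord)
qed

section \<open>Upper bound for the number of edges\<close>

definition sup_norm :: "nat \<Rightarrow> (nat \<Rightarrow> int) \<Rightarrow> int" where
  "sup_norm r p = Max ((\<lambda>i. \<bar>p i\<bar>) ` {..<r})"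

definition nonzero_directions :: "nat \<Rightarrow> nat \<Rightarrow> (nat \<Rightarrow> int) set" where
  "nonzero_directions n r = {p \<in> cube r {-int n..int n}. \<exists>i<r. p i \<noteq> 0}"

definition step_range :: "nat \<Rightarrow> nat \<Rightarrow> (nat \<Rightarrow> int) \<Rightarrow> int set" where
  "step_range n r p = {k. k \<noteq> 0 \<and> \<bar>k\<bar> * sup_norm r p \<le> int n}"

definition line_point :: "(nat \<Rightarrow> nat) \<Rightarrow> (nat \<Rightarrow> int) \<Rightarrow> int \<Rightarrow> (nat \<Rightarrow> nat)" where
  "line_point u p k = (\<lambda>i. nat (int (u i) + k * p i))"

lemma sup_norm_ge: "i < r \<Longrightarrow> \<bar>p i\<bar> \<le> sup_norm r p"
  unfolding sup_norm_def by (rule Max_ge) auto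

lemma sup_norm_attained: "0 < r \<Longrightarrow> \<exists>j<r. sup_norm r p = \<bar>p j\<bar>"
proof -
  assume "0 < r"
  then have "sup_norm r p \<in> (\<lambda>i. \<bar>p i\<bar>) ` {..<r}" unfolding sup_norm_def by (intro Max_in) auto
  then show ?thesis by auto
qed

lemma nonzero_directions_sup_norm:
  assumes "p \<in> nonzero_directions n r"
  shows "1 \<le> sup_norm r p" "sup_norm r p \<le> int n"
proof -
  obtain i where "i < r" "p i \<noteq> 0" using assms unfolding nonzero_directions_def by auto
  then show "1 \<le> sup_norm r p" using sup_norm_ge[of i r p] by linarith
  obtain j where "j < r" "sup_norm r p = \<bar>p j\<bar>" using sup_norm_attained[of r p] \<open>i < r\<close> by auto
  then show "sup_norm r p \<le> int n" using assms unfolding nonzero_directions_def cube_def by auto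
qed

lemma obtain_two_distinct:
  assumes "card S \<ge> 2"
  obtains s s' where "s \<in> S" "s' \<in> S" "s \<noteq> s'"
proof -
  have "finite S" using assms card.infinite by fastforce
  then have "\<not> (\<forall>x\<in>S. \<forall>y\<in>S. x = y)" using assms card_le_Suc0_iff_eq[of S] by auto
  then show ?thesis using that by blast
qed

lemma Hedges_parametrisation:
  assumes S: "S \<in> Hedges n r" and r: "r \<ge> 2"
  obtains u p K where "u \<in> grid n r" "p \<in> nonzero_directions n r" "K \<subseteq> step_range n r p"
    "card K = r - 1" "S = insert u (line_point u p ` K)"
proof -
  have Sg: "S \<subseteq> grid n r" and cS: "card S = r" and line: "on_common_line r S"
    using S unfolding Hedges_def by auto
  have "finite S" using cS r card.infinite by fastforce
  obtain u v where "u \<in> S" "v \<in> S" "u \<noteq> v" using cS r obtain_two_distinct[of S] by auto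
  have grid_bounds: "1 \<le> x i \<and> x i \<le> n" if "x \<in> S" "i < r" for x i
    using Sg that unfolding grid_def by auto
  have grid_zero: "x i = 0" if "x \<in> S" "r \<le> i" for x i
    using Sg that unfolding grid_def by auto
  have "\<exists>i<r. u i \<noteq> v i" using grid_eqI[of u n r v] Sg \<open>u \<in> S\<close> \<open>v \<in> S\<close> \<open>u \<noteq> v\<close> by blast
  then obtain p k where p0: "\<forall>i\<ge>r. p i = 0" and pnz: "\<exists>i<r. p i \<noteq> 0"
    and coord: "\<And>x i. x \<in> S \<Longrightarrow> i < r \<Longrightarrow> int (x i) = int (u i) + k x * p i"
    using collinear_lattice_points[OF line \<open>u \<in> S\<close> \<open>v \<in> S\<close>] by blast
  have point: "line_point u p (k x) = x" if "x \<in> S" for x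
  proof
    fix i show "line_point u p (k x) i = x i"
      using coord[OF that, of i] p0 grid_zero[OF that, of i] grid_zero[OF \<open>u \<in> S\<close>, of i]
      unfolding line_point_def by (cases "i < r") auto
  qed
  have inj: "inj_on k S" by (rule inj_on_inverseI[of _ "line_point u p"]) (rule point)
  have step_bound: "\<bar>k x * p j\<bar> \<le> int n" if "x \<in> S" "j < r" for x j
    using coord[OF that] grid_bounds[OF that] grid_bounds[OF \<open>u \<in> S\<close> that(2)] by linarith
  have "k u = 0" using coord[OF \<open>u \<in> S\<close>] pnz by auto
  then have k0: "k x \<noteq> 0" if "x \<in> S - {u}" for x
    using inj_onD[OF inj, of x u] \<open>u \<in> S\<close> that by auto
  have "\<bar>p j\<bar> \<le> int n" if "j < r" for j
  proof -
    have "k v \<noteq> 0" using k0[of v] \<open>v \<in> S\<close> \<open>u \<noteq> v\<close> by blast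
    then have "1 \<le> \<bar>k v\<bar>" by arith
    then have "\<bar>p j\<bar> \<le> \<bar>k v\<bar> * \<bar>p j\<bar>" using mult_right_mono[of 1 "\<bar>k v\<bar>" "\<bar>p j\<bar>"] by simp
    then show ?thesis using step_bound[OF \<open>v \<in> S\<close> that] by (simp add: abs_mult)
  qed
  then have "p \<in> nonzero_directions n r"
    using p0 pnz unfolding nonzero_directions_def cube_def by (force simp: abs_le_iff)
  moreover have "k ` (S - {u}) \<subseteq> step_range n r p"
  proof
    fix m assume "m \<in> k ` (S - {u})"
    then obtain x where x: "x \<in> S - {u}" "m = k x" by blast
    obtain j where "j < r" "sup_norm r p = \<bar>p j\<bar>" using sup_norm_attained[of r p] r by auto
    then show "m \<in> step_range n r p"
      using step_bound[of x j] k0[OF x(1)] x unfolding step_range_def by (auto simp: abs_mult)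
  qed
  moreover have "card (k ` (S - {u})) = r - 1"
    using card_image[OF inj_on_subset[OF inj]] cS \<open>u \<in> S\<close> \<open>finite S\<close> by auto
  moreover have "S = insert u (line_point u p ` k ` (S - {u}))"
    using point \<open>u \<in> S\<close> by (auto simp: image_image)
  ultimately show ?thesis using that \<open>u \<in> S\<close> Sg by blast
qed

lemma card_step_range:
  assumes "p \<in> nonzero_directions n r"
  shows "finite (step_range n r p)"
    and "real (card (step_range n r p)) \<le> 2 * real n / real_of_int (sup_norm r p)"
proof -
  define m where "m = sup_norm r p"
  define q where "q = int n div m"
  have m1: "1 \<le> m" using nonzero_directions_sup_norm[OF assms] unfolding m_def by simp
  have sub: "step_range n r p \<subseteq> {-q..-1} \<union> {1..q}"
  proof
    fix k assume "k \<in> step_range n r p"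
    then have "k \<noteq> 0" and km: "\<bar>k\<bar> * m \<le> int n" unfolding step_range_def m_def by auto
    moreover have "\<bar>k\<bar> \<le> q" using zdiv_mono1[OF km, of m] m1 unfolding q_def by simp
    ultimately show "k \<in> {-q..-1} \<union> {1..q}" by auto
  qed
  show "finite (step_range n r p)" by (rule finite_subset[OF sub]) auto
  have "card (step_range n r p) \<le> card ({-q..-1} \<union> {1..q})" by (rule card_mono[OF _ sub]) auto
  also have "\<dots> \<le> card {-q..-1} + card {1..q}" by (rule card_Un_le)
  also have "\<dots> = 2 * nat q" by simp
  finally have "real (card (step_range n r p)) \<le> real (2 * nat q)" by linarith
  moreover have "0 \<le> q" unfolding q_def using m1 by (simp add: pos_imp_zdiv_nonneg_iff)
  ultimately have "real (card (step_range n r p)) \<le> 2 * real_of_int q" by simp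
  moreover have "real_of_int q \<le> real n / real_of_int m"
  proof -
    have "q * m \<le> int n"
      using m1 pos_mod_sign[of m "int n"] div_mult_mod_eq[of "int n" m] unfolding q_def by linarith
    then have "real_of_int q * real_of_int m \<le> real n" by (metis of_int_le_iff of_int_mult of_int_of_nat_eq)
    then show ?thesis using m1 by (simp add: field_simps)
  qed
  ultimately show "real (card (step_range n r p)) \<le> 2 * real n / real_of_int (sup_norm r p)"
    unfolding m_def by simp
qed

text \<open>The product over the coordinates replaces the single factor 1 / m (m the max-norm of p),
  making the sum over all directions factorise.\<close>
lemma edges_per_direction_le:
  assumes p: "p \<in> nonzero_directions n r" and r: "r \<ge> 1"
  shows "real n ^ r * real (card (step_range n r p) choose (r - 1))
     \<le> 2 ^ (r - 1) * real n ^ (2 * r) * (\<Prod>i<r. 1 / real_of_int (max \<bar>p i\<bar> 1))"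
proof -
  define c where "c = card (step_range n r p)"
  define m where "m = real_of_int (sup_norm r p)"
  define Q where "Q = (\<Prod>i<r. real_of_int (max \<bar>p i\<bar> 1))"
  have m1: "1 \<le> m" and mn: "m \<le> real n"
    using nonzero_directions_sup_norm[OF p] unfolding m_def by simp_all
  have "real (c choose (r - 1)) \<le> real c ^ (r - 1)"
  proof (cases "r - 1 \<le> c")
    case True
    then show ?thesis by (metis binomial_le_pow of_nat_le_iff of_nat_power)
  qed (simp add: binomial_eq_0)
  also have "\<dots> \<le> (2 * real n / m) ^ (r - 1)"
    using card_step_range(2)[OF p] unfolding c_def m_def by (intro power_mono) auto
  also have "\<dots> = 2 ^ (r - 1) * real n ^ (r - 1) * (1 / m ^ (r - 1))"
    by (simp add: power_divide power_mult_distrib)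
  finally have choose_le:
    "real (c choose (r - 1)) \<le> 2 ^ (r - 1) * real n ^ (r - 1) * (1 / m ^ (r - 1))" .
  have Q1: "Q \<ge> 1" unfolding Q_def by (rule prod_ge_1) auto
  have "Q \<le> (\<Prod>i<r. m)" unfolding Q_def
    using sup_norm_ge[of _ r p] m1 unfolding m_def by (intro prod_mono) auto
  also have "\<dots> = m * m ^ (r - 1)" using r by (cases r) simp_all
  also have "\<dots> \<le> real n * m ^ (r - 1)" by (rule mult_right_mono[OF mn]) (use m1 in simp)
  finally have "1 / m ^ (r - 1) \<le> real n / Q" using Q1 m1 by (simp add: field_simps)
  then have "real n ^ r * real (c choose (r - 1))
      \<le> real n ^ r * (2 ^ (r - 1) * real n ^ (r - 1) * (real n / Q))"
    using choose_le by (intro mult_left_mono order.trans[OF choose_le]) simp_all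
  also have "\<dots> = 2 ^ (r - 1) * (real n ^ r * (real n ^ (r - 1) * real n)) * (1 / Q)" by simp
  also have "real n ^ (r - 1) * real n = real n ^ r" using r by (cases r) (simp_all add: mult.commute)
  finally show ?thesis
    unfolding c_def Q_def by (simp add: prod_dividef mult_2 power_add)
qed

definition harmonic_weight :: "nat \<Rightarrow> real" where
  "harmonic_weight n = (\<Sum>a\<in>{-int n..int n}. 1 / real_of_int (max \<bar>a\<bar> 1))"

lemma harmonic_weight_eq: "harmonic_weight n = 1 + 2 * harm n"
proof (induction n)
  case 0 show ?case by (simp add: harmonic_weight_def harm_def)
next
  case (Suc n)
  have e: "{-int (Suc n)..int (Suc n)} = insert (-int (Suc n)) (insert (int (Suc n)) {-int n..int n})"
    by auto
  have "harmonic_weight (Suc n) = 1 / real_of_int (max \<bar>-int (Suc n)\<bar> 1)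
      + (1 / real_of_int (max \<bar>int (Suc n)\<bar> 1) + harmonic_weight n)"
    unfolding harmonic_weight_def e by (subst sum.insert; simp)+
  also have "\<dots> = harmonic_weight n + 2 / (real n + 1)" by (simp add: field_simps)
  finally show ?case using Suc by (simp add: harm_Suc field_simps)
qed

lemma harm_le_ln: "n \<ge> 1 \<Longrightarrow> harm n \<le> 1 + ln (real n + 1)"
proof -
  assume "n \<ge> 1"
  then obtain m where m: "n = Suc m" by (cases n) auto
  have "(euler_mascheroni::real) \<ge> harm (Suc m) - ln (real (m + 2)) + 1 / real (2 * (m + 2))"
    by (rule euler_mascheroni_lower)
  moreover have "(euler_mascheroni::real) < 13/22" by (rule euler_mascheroni_less_13_over_22)
  moreover have "1 / real (2 * (m + 2)) \<ge> 0" by simp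
  moreover have "ln (real (m + 2)) = ln (real n + 1)" using m by simp
  moreover have "(harm n::real) = harm (Suc m)" using m by simp
  ultimately show ?thesis by linarith
qed

lemma log2_ge_of_pow: assumes "2 ^ k \<le> (x::real)" shows "real k \<le> log 2 x"
proof -
  have "0 < x" using assms by (metis zero_less_numeral zero_less_power order_less_le_trans)
  then have "log 2 (2 ^ k) \<le> log 2 x" using assms by (subst log_le_cancel_iff) auto
  then show ?thesis by simp
qed

lemma harmonic_weight_le_log: assumes "n \<ge> 8" shows "harmonic_weight n \<le> 4 * log 2 n"
proof -
  have L3: "log 2 n \<ge> 3" using log2_ge_of_pow[of 3 n] assms by simp
  have "ln (real n + 1) \<le> ln (2 * real n)" using assms by (subst ln_le_cancel_iff) auto
  also have "\<dots> = ln 2 + ln 2 * log 2 n" using assms by (simp add: ln_mult log_def)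
  also have "\<dots> \<le> 1 + log 2 n"
    using ln_2_less_1 L3 mult_right_mono[of "ln 2" 1 "log 2 n"] by linarith
  finally have "harmonic_weight n \<le> 5 + 2 * log 2 n"
    unfolding harmonic_weight_eq using harm_le_ln[of n] assms by simp
  then show ?thesis using L3 by linarith
qed

lemma card_Hedges_le:
  assumes r: "r \<ge> 2"
  shows "real (card (Hedges n r)) \<le> 2 ^ (r - 1) * real n ^ (2 * r) * harmonic_weight n ^ r"
proof -
  define choices where "choices p = {K. K \<subseteq> step_range n r p \<and> card K = r - 1}" for p
  define Par where "Par = (SIGMA p:nonzero_directions n r. grid n r \<times> choices p)"
  define edge where "edge = (\<lambda>(p, u, K). insert u (line_point u p ` K))"
  have "Hedges n r \<subseteq> edge ` Par"
  proof
    fix S assume S: "S \<in> Hedges n r"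
    obtain u p K where "u \<in> grid n r" "p \<in> nonzero_directions n r" "K \<subseteq> step_range n r p"
      "card K = r - 1" "S = insert u (line_point u p ` K)"
      by (rule Hedges_parametrisation[OF S r])
    then have "(p, u, K) \<in> Par" "S = edge (p, u, K)" unfolding Par_def choices_def edge_def by auto
    then show "S \<in> edge ` Par" by blast
  qed
  have fin_dirs: "finite (nonzero_directions n r)" unfolding nonzero_directions_def
    by (rule finite_subset[OF _ finite_cube[of "{-int n..int n}" r]]) auto
  have fin_choices: "finite (grid n r \<times> choices p)" if "p \<in> nonzero_directions n r" for p
    using card_step_range(1)[OF that] finite_grid unfolding choices_def by auto
  have card_choices: "card (grid n r \<times> choices p) = n ^ r * (card (step_range n r p) choose (r - 1))"
    if "p \<in> nonzero_directions n r" for p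
    unfolding choices_def
    by (simp only: card_cartesian_product card_grid n_subsets[OF card_step_range(1)[OF that]])
  have "finite Par" unfolding Par_def by (rule finite_SigmaI[OF fin_dirs fin_choices])
  have "card (Hedges n r) \<le> card (edge ` Par)"
    by (rule card_mono[OF finite_imageI[OF \<open>finite Par\<close>] \<open>Hedges n r \<subseteq> edge ` Par\<close>])
  also have "\<dots> \<le> card Par" by (rule card_image_le[OF \<open>finite Par\<close>])
  also have "card Par = (\<Sum>p\<in>nonzero_directions n r. n ^ r * (card (step_range n r p) choose (r - 1)))"
    unfolding Par_def using fin_dirs fin_choices card_choices by (subst card_SigmaI) auto
  finally have "real (card (Hedges n r))
      \<le> real (\<Sum>p\<in>nonzero_directions n r. n ^ r * (card (step_range n r p) choose (r - 1)))"
    by (simp only: of_nat_le_iff)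
  also have "\<dots> = (\<Sum>p\<in>nonzero_directions n r. real n ^ r * real (card (step_range n r p) choose (r - 1)))"
    by (simp only: of_nat_sum of_nat_mult of_nat_power)
  also have "\<dots> \<le> (\<Sum>p\<in>nonzero_directions n r.
      2 ^ (r - 1) * real n ^ (2 * r) * (\<Prod>i<r. 1 / real_of_int (max \<bar>p i\<bar> 1)))"
    using edges_per_direction_le r by (intro sum_mono) auto
  also have "\<dots> \<le> (\<Sum>p\<in>cube r {-int n..int n}.
      2 ^ (r - 1) * real n ^ (2 * r) * (\<Prod>i<r. 1 / real_of_int (max \<bar>p i\<bar> 1)))"
    by (rule sum_mono2[OF finite_cube]) (auto simp: nonzero_directions_def intro!: prod_nonneg)
  also have "\<dots> = 2 ^ (r - 1) * real n ^ (2 * r)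
      * (\<Sum>p\<in>cube r {-int n..int n}. \<Prod>i<r. 1 / real_of_int (max \<bar>p i\<bar> 1))"
    by (simp add: sum_distrib_left)
  also have "\<dots> = 2 ^ (r - 1) * real n ^ (2 * r) * harmonic_weight n ^ r"
    unfolding harmonic_weight_def by (subst sum_prod_cube) auto
  finally show ?thesis .
qed

lemma card_Hedges_le_log:
  assumes "r \<ge> 2" "n \<ge> 8"
  shows "real (card (Hedges n r)) \<le> 8 ^ r * (log 2 n) ^ r * real n ^ (2 * r)"
proof -
  have "0 \<le> harmonic_weight n" unfolding harmonic_weight_def by (rule sum_nonneg) simp
  then have "harmonic_weight n ^ r \<le> (4 * log 2 n) ^ r"
    by (intro power_mono harmonic_weight_le_log[OF assms(2)])
  moreover have "(2::real) ^ (r - 1) \<le> 2 ^ r" by (rule power_increasing) auto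
  ultimately have "2 ^ (r - 1) * harmonic_weight n ^ r \<le> 2 ^ r * (4 * log 2 n) ^ r"
    using \<open>0 \<le> harmonic_weight n\<close> by (intro mult_mono) auto
  also have "\<dots> = (2 * (4 * log 2 n)) ^ r" by (rule power_mult_distrib[symmetric])
  also have "\<dots> = 8 ^ r * (log 2 n) ^ r" by (simp add: power_mult_distrib)
  finally have "2 ^ (r - 1) * harmonic_weight n ^ r * real n ^ (2 * r) \<le> 8 ^ r * (log 2 n) ^ r * real n ^ (2 * r)"
    by (rule mult_right_mono) simp
  moreover have "real (card (Hedges n r)) \<le> 2 ^ (r - 1) * harmonic_weight n ^ r * real n ^ (2 * r)"
    using card_Hedges_le[OF assms(1), of n] by (simp add: ac_simps)
  ultimately show ?thesis by linarith
qed

section \<open>Edges on arithmetic progressions\<close>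

definition ap_point :: "(nat \<Rightarrow> nat) \<Rightarrow> (nat \<Rightarrow> nat) \<Rightarrow> nat \<Rightarrow> (nat \<Rightarrow> nat)" where
  "ap_point x d j = (\<lambda>i. x i + j * d i)"

definition ap_window :: "nat \<Rightarrow> nat \<Rightarrow> nat \<Rightarrow> (nat \<Rightarrow> nat) \<Rightarrow> (nat \<Rightarrow> nat) set" where
  "ap_window n r L d = {x \<in> grid n r. \<forall>i<r. x i + (L - 1) * d i \<le> n}"

definition rich_starts ::
    "nat \<Rightarrow> nat \<Rightarrow> nat \<Rightarrow> (nat \<Rightarrow> nat) set \<Rightarrow> (nat \<Rightarrow> nat) \<Rightarrow> (nat \<Rightarrow> nat) set" where
  "rich_starts n r L T d = {x \<in> ap_window n r L d. r \<le> card {j. j < L \<and> ap_point x d j \<in> T}}"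

lemma finite_rich_starts: "finite (rich_starts n r L T d)"
  unfolding rich_starts_def ap_window_def by (rule finite_subset[OF _ finite_grid]) auto

text \<open>Coprimality of the first two coordinates singles out one direction per line, so an edge
  determines the direction of every progression containing it.\<close>
definition coprime_directions :: "nat \<Rightarrow> nat \<Rightarrow> (nat \<Rightarrow> nat) set" where
  "coprime_directions N r = {d \<in> cube r {1..N}. coprime (d 0) (d 1)}"

lemma ap_point_in_grid:
  assumes x: "x \<in> ap_window n r L d" and d: "d \<in> cube r {1..N}" and "j < L"
  shows "ap_point x d j \<in> grid n r"
  unfolding grid_def
proof (intro CollectI conjI allI impI)
  fix i assume "i < r"
  have "j * d i \<le> (L - 1) * d i" using \<open>j < L\<close> by (intro mult_right_mono) auto
  moreover have "1 \<le> x i" "x i + (L - 1) * d i \<le> n"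
    using x \<open>i < r\<close> unfolding ap_window_def grid_def by auto
  ultimately have "x i + j * d i \<le> n" by linarith
  then show "ap_point x d j i \<in> {1..n}" using \<open>1 \<le> x i\<close> unfolding ap_point_def by simp
next
  fix i assume "r \<le> i"
  then show "ap_point x d j i = 0" using x d unfolding ap_window_def grid_def cube_def ap_point_def by auto
qed

lemma inj_ap_point:
  assumes "d \<in> cube r {1..N}" "r \<ge> 1"
  shows "inj (ap_point x d)"
proof (rule injI)
  fix j j' assume "ap_point x d j = ap_point x d j'"
  then have "x 0 + j * d 0 = x 0 + j' * d 0" unfolding ap_point_def by meson
  moreover have "d 0 \<ge> 1" using assms unfolding cube_def by auto
  ultimately show "j = j'" by simp
qed

lemma ap_edge_in_Hedges:
  assumes x: "x \<in> ap_window n r L d" and d: "d \<in> cube r {1..N}" and r: "r \<ge> 1"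
    and J: "J \<subseteq> {..<L}" "card J = r"
  shows "ap_point x d ` J \<in> Hedges n r"
proof -
  have "ap_point x d ` J \<subseteq> grid n r" using ap_point_in_grid[OF x d] J by auto
  moreover have "card (ap_point x d ` J) = r"
    using card_image[OF inj_on_subset[OF inj_ap_point[OF d r] subset_UNIV]] J by simp
  moreover have "on_common_line r (ap_point x d ` J)"
    unfolding on_common_line_def
  proof (rule exI[of _ "\<lambda>i. real (x i)"], rule exI[of _ "\<lambda>i. real (d i)"], intro conjI)
    show "\<exists>i<r. real (d i) \<noteq> 0" using d r unfolding cube_def by (auto intro!: exI[of _ 0])
    show "\<forall>y\<in>ap_point x d ` J. \<exists>t. \<forall>i<r. real (y i) = real (x i) + t * real (d i)"
      unfolding ap_point_def by auto
  qed
  ultimately show ?thesis unfolding Hedges_def by auto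
qed

lemma coprime_direction_unique:
  assumes d: "d \<in> coprime_directions N r" and d': "d' \<in> coprime_directions N r" and r: "r \<ge> 2"
    and s: "s = ap_point x d j" "s = ap_point x' d' i"
    and s': "s' = ap_point x d j'" "s' = ap_point x' d' i'" and "s \<noteq> s'"
  shows "d = d'"
proof -
  have pos: "d 0 \<ge> 1" "d' 0 \<ge> 1"
    using d d' r unfolding coprime_directions_def cube_def by auto
  define a where "a = int j' - int j"
  define b where "b = int i' - int i"
  have co: "a * int (d k) = b * int (d' k)" for k
  proof -
    have "int (s k) = int (x k) + int j * int (d k)" using s(1) unfolding ap_point_def by simp
    moreover have "int (s k) = int (x' k) + int i * int (d' k)" using s(2) unfolding ap_point_def by simp
    moreover have "int (s' k) = int (x k) + int j' * int (d k)" using s'(1) unfolding ap_point_def by simp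
    moreover have "int (s' k) = int (x' k) + int i' * int (d' k)" using s'(2) unfolding ap_point_def by simp
    ultimately show ?thesis unfolding a_def b_def by (simp add: algebra_simps)
  qed
  have "a \<noteq> 0" using s s' \<open>s \<noteq> s'\<close> unfolding a_def by auto
  have "b \<noteq> 0" using co[of 0] \<open>a \<noteq> 0\<close> pos by auto
  have "(a * b) * (int (d 0) * int (d' 1)) = (a * b) * (int (d' 0) * int (d 1))"
    using co[of 0] co[of 1] by (metis mult.commute mult.left_commute)
  then have "int (d 0) * int (d' 1) = int (d' 0) * int (d 1)" using \<open>a \<noteq> 0\<close> \<open>b \<noteq> 0\<close> by simp
  then have cross: "d 0 * d' 1 = d' 0 * d 1" by (metis of_nat_eq_iff of_nat_mult)
  have cop: "coprime (d 0) (d 1)" "coprime (d' 0) (d' 1)"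
    using d d' unfolding coprime_directions_def by auto
  have "d 0 dvd d' 0 * d 1" "d' 0 dvd d 0 * d' 1" using cross by (metis dvd_triv_left)+
  then have "d 0 dvd d' 0" "d' 0 dvd d 0" using cop by (simp_all add: coprime_dvd_mult_left_iff)
  then have "d 0 = d' 0" by (rule dvd_antisym)
  then have "a = b" using co[of 0] pos by simp
  show "d = d'"
  proof
    fix k show "d k = d' k" using co[of k] \<open>a = b\<close> \<open>a \<noteq> 0\<close> by simp
  qed
qed

lemma card_ap_representations_le:
  assumes r: "r \<ge> 2" and "s \<in> S" "s' \<in> S" "s \<noteq> s'"
  shows "finite {(d, x). d \<in> coprime_directions N r \<and> S \<subseteq> ap_point x d ` {..<L}}"
    and "card {(d, x). d \<in> coprime_directions N r \<and> S \<subseteq> ap_point x d ` {..<L}} \<le> L"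
proof -
  let ?R = "{(d, x). d \<in> coprime_directions N r \<and> S \<subseteq> ap_point x d ` {..<L}}"
  have "finite ?R \<and> card ?R \<le> L"
  proof (cases "?R = {}")
    case False
    then obtain d0 x0 where d0: "d0 \<in> coprime_directions N r" and x0: "S \<subseteq> ap_point x0 d0 ` {..<L}"
      by auto
    have sub: "?R \<subseteq> (\<lambda>j. (d0, \<lambda>k. s k - j * d0 k)) ` {..<L}"
    proof clarify
      fix d x assume d: "d \<in> coprime_directions N r" and x: "S \<subseteq> ap_point x d ` {..<L}"
      obtain j j' where "j < L" "s = ap_point x d j" "s' = ap_point x d j'"
        using x \<open>s \<in> S\<close> \<open>s' \<in> S\<close> by blast
      moreover obtain i i' where "s = ap_point x0 d0 i" "s' = ap_point x0 d0 i'"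
        using x0 \<open>s \<in> S\<close> \<open>s' \<in> S\<close> by blast
      ultimately have "d = d0" using coprime_direction_unique[OF d d0 r] \<open>s \<noteq> s'\<close> by blast
      moreover have "x = (\<lambda>k. s k - j * d k)" using \<open>s = ap_point x d j\<close> by (simp add: ap_point_def)
      ultimately show "(d, x) \<in> (\<lambda>j. (d0, \<lambda>k. s k - j * d0 k)) ` {..<L}" using \<open>j < L\<close> by blast
    qed
    have "card ?R \<le> card ((\<lambda>j. (d0, \<lambda>k. s k - j * d0 k)) ` {..<L})" by (rule card_mono[OF _ sub]) simp
    also have "\<dots> \<le> L" using card_image_le[of "{..<L}"] by simp
    finally show ?thesis using finite_subset[OF sub] by simp
  next
    case True
    show ?thesis unfolding True by simp
  qed
  then show "finite ?R" "card ?R \<le> L" by auto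
qed

lemma card_le_mult_card_image:
  assumes "finite A" and "\<And>y. y \<in> f ` A \<Longrightarrow> card {a \<in> A. f a = y} \<le> L"
  shows "card A \<le> L * card (f ` A)"
proof -
  have "card A = card (\<Union>y\<in>f ` A. {a \<in> A. f a = y})" by (rule arg_cong[of _ _ card]) auto
  also have "\<dots> \<le> (\<Sum>y\<in>f ` A. card {a \<in> A. f a = y})" by (rule card_UN_le) (use assms in simp)
  also have "\<dots> \<le> (\<Sum>y\<in>f ` A. L)" by (rule sum_mono) (rule assms(2))
  finally show ?thesis by (simp add: mult.commute)
qed

lemma card_rich_pairs_le:
  assumes r: "r \<ge> 2" and T: "T \<subseteq> grid n r"
  shows "card (SIGMA d:coprime_directions N r. rich_starts n r L T d) \<le> L * induced_edges n r T"
proof -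
  define hits where "hits d x = {j. j < L \<and> ap_point x d j \<in> T}" for d x
  define Sg where "Sg = (SIGMA d:coprime_directions N r. rich_starts n r L T d)"
  define J where "J z = (SOME J. J \<subseteq> hits (fst z) (snd z) \<and> card J = r)" for z
  have J: "J z \<subseteq> hits (fst z) (snd z) \<and> card (J z) = r" if "z \<in> Sg" for z
  proof -
    have "r \<le> card (hits (fst z) (snd z))" using that unfolding Sg_def rich_starts_def hits_def by auto
    then obtain K where "K \<subseteq> hits (fst z) (snd z)" "card K = r" by (rule obtain_subset_with_card_n)
    then have "K \<subseteq> hits (fst z) (snd z) \<and> card K = r" by simp
    then show ?thesis unfolding J_def by (rule someI)
  qed
  define edge where "edge z = ap_point (snd z) (fst z) ` J z" for z
  have edge: "edge z \<in> {S \<in> Hedges n r. S \<subseteq> T}" if "z \<in> Sg" for z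
  proof -
    have "fst z \<in> coprime_directions N r" and window: "snd z \<in> ap_window n r L (fst z)"
      using that unfolding Sg_def rich_starts_def by auto
    then have "edge z \<in> Hedges n r" unfolding edge_def coprime_directions_def
      by (intro ap_edge_in_Hedges[OF window]) (use J[OF that] r in \<open>auto simp: hits_def\<close>)
    moreover have "edge z \<subseteq> T" using J[OF that] unfolding edge_def hits_def by auto
    ultimately show ?thesis by simp
  qed
  have fibre: "card {z \<in> Sg. edge z = S} \<le> L" if "S \<in> edge ` Sg" for S
  proof -
    have "card S = r" using edge that unfolding Hedges_def by auto
    then obtain s s' where s: "s \<in> S" "s' \<in> S" "s \<noteq> s'" using r obtain_two_distinct[of S] by auto
    have "{z \<in> Sg. edge z = S} \<subseteq> {(d, x). d \<in> coprime_directions N r \<and> S \<subseteq> ap_point x d ` {..<L}}"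
    proof clarify
      fix d x assume "(d, x) \<in> Sg" "S = edge (d, x)"
      then show "d \<in> coprime_directions N r \<and> edge (d, x) \<subseteq> ap_point x d ` {..<L}"
        using J[of "(d, x)"] unfolding Sg_def edge_def hits_def by auto
    qed
    then have "card {z \<in> Sg. edge z = S}
        \<le> card {(d, x). d \<in> coprime_directions N r \<and> S \<subseteq> ap_point x d ` {..<L}}"
      by (rule card_mono[OF card_ap_representations_le(1)[OF r s]])
    also have "\<dots> \<le> L" by (rule card_ap_representations_le(2)[OF r s])
    finally show ?thesis .
  qed
  have "finite (coprime_directions N r)" unfolding coprime_directions_def
    by (rule finite_subset[OF _ finite_cube[of "{1..N}" r]]) auto
  then have "finite Sg" unfolding Sg_def using finite_rich_starts by (rule finite_SigmaI)
  then have "card Sg \<le> L * card (edge ` Sg)" by (rule card_le_mult_card_image[OF _ fibre])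
  moreover have "finite {S \<in> Hedges n r. S \<subseteq> T}"
    by (rule finite_subset[of _ "Pow T"]) (use finite_subset[OF T finite_grid] in auto)
  then have "card (edge ` Sg) \<le> induced_edges n r T"
    unfolding induced_edges_def by (rule card_mono) (use edge in blast)
  ultimately show ?thesis unfolding Sg_def using mult_le_mono2 order.trans by blast
qed

section \<open>Progressions meeting a dense set often\<close>

lemma power_sub_margin_ge:
  assumes n: "n > 0" and M: "40 * r * M \<le> n" and r: "r \<ge> 1"
  shows "19/20 * real n ^ r \<le> real ((n - 2 * M) ^ r)"
proof -
  have "40 * 1 * M \<le> 40 * r * M" using r by (intro mult_right_mono) auto
  then have M2: "2 * M \<le> n" using M by linarith
  define x where "x = - (2 * real M / real n)"
  have "2 * real M / real n \<le> 1" using M2 n by (simp add: divide_le_eq_1)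
  then have x1: "-1 \<le> x" unfolding x_def by linarith
  have "40 * real r * real M \<le> real n" using M by (metis of_nat_le_iff of_nat_mult of_nat_numeral)
  then have "real r * (2 * real M / real n) \<le> 1/20" using n by (simp add: field_simps)
  then have "19/20 * real n ^ r \<le> (1 + real r * x) * real n ^ r"
    unfolding x_def by (intro mult_right_mono) auto
  also have "\<dots> \<le> (1 + x) ^ r * real n ^ r"
    by (rule mult_right_mono[OF Bernoulli_inequality[OF x1]]) simp
  also have "\<dots> = ((1 + x) * real n) ^ r" by (simp add: power_mult_distrib)
  also have "(1 + x) * real n = real (n - 2 * M)"
    unfolding x_def using n M2 by (simp add: algebra_simps of_nat_diff)
  finally show ?thesis by (simp only: of_nat_power)
qed

lemma dense_in_inner_cube:
  assumes T: "T \<subseteq> grid n r" and cT: "real n ^ r / 10 \<le> real (card T)"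
    and n: "n > 0" and M: "40 * r * M \<le> n" and r: "r \<ge> 1"
  shows "real n ^ r / 20 \<le> real (card (T \<inter> cube r {M+1..n-M}))"
proof -
  define I where "I = cube r {M+1..n-M}"
  have "40 * 1 * M \<le> 40 * r * M" using r by (intro mult_right_mono) auto
  then have "2 * M \<le> n" using M by linarith
  then have cI: "card I = (n - 2 * M) ^ r" unfolding I_def by (simp add: card_cube mult_2)
  have IG: "I \<subseteq> grid n r" unfolding I_def grid_eq_cube cube_def by auto
  have finT: "finite T" using finite_subset[OF T finite_grid] .
  have "card T = card (T \<inter> I) + card (T - I)" by (rule card_Int_Diff[OF finT])
  moreover have "card (T - I) \<le> card (grid n r - I)" by (rule card_mono) (use finite_grid T in auto)
  moreover have "card (grid n r - I) = n ^ r - card I"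
    using card_Diff_subset[OF finite_subset[OF IG finite_grid] IG] by (simp add: card_grid)
  moreover have "(n - 2 * M) ^ r \<le> n ^ r" by (simp add: power_mono)
  ultimately have "card T + (n - 2 * M) ^ r \<le> card (T \<inter> I) + n ^ r" using cI by linarith
  then have "real (card T + (n - 2 * M) ^ r) \<le> real (card (T \<inter> I) + n ^ r)"
    by (simp only: of_nat_le_iff)
  then have "real (card T) + real ((n - 2 * M) ^ r) \<le> real (card (T \<inter> I)) + real n ^ r"
    by (simp only: of_nat_add of_nat_power)
  then show ?thesis using power_sub_margin_ge[OF n M r] cT unfolding I_def by linarith
qed

text \<open>Stepping back by j d is an injection from the part of T inside the inner cube into the
  window, since j d \<le> L N \<le> M keeps coordinates positive and the progression inside [n]^r.\<close>
lemma card_dense_le_shifted: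
  assumes d: "d \<in> cube r {1..N}" and "j < L" and LN: "L * N \<le> M"
  shows "card (T \<inter> cube r {M+1..n-M}) \<le> card {x \<in> ap_window n r L d. ap_point x d j \<in> T}"
proof -
  define I where "I = cube r {M+1..n-M}"
  define start where "start y = (\<lambda>i. y i - j * d i)" for y :: "nat \<Rightarrow> nat"
  have dN: "d i \<le> N" for i using d unfolding cube_def by (cases "i < r") auto
  have jd: "j * d i \<le> M" "(L - 1) * d i \<le> M" for i
    using mult_mono[OF _ dN, of j L i] mult_mono[OF _ dN, of "L - 1" L i] \<open>j < L\<close> LN by auto
  have I_bounds: "M + 1 \<le> y i \<and> y i \<le> n - M" if "y \<in> I" "i < r" for y i
    using that unfolding I_def cube_def by auto
  have I_zero: "y i = 0" "d i = 0" if "y \<in> I" "r \<le> i" for y i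
    using that d unfolding I_def cube_def by auto
  have "start ` (T \<inter> I) \<subseteq> {x \<in> ap_window n r L d. ap_point x d j \<in> T}"
  proof
    fix z assume "z \<in> start ` (T \<inter> I)"
    then obtain y where "y \<in> T" "y \<in> I" "z = start y" by blast
    have "ap_point (start y) d j = y"
    proof
      fix i show "ap_point (start y) d j i = y i"
        using jd[of i] I_bounds[OF \<open>y \<in> I\<close>, of i] I_zero[OF \<open>y \<in> I\<close>, of i]
        unfolding ap_point_def start_def by (cases "i < r") auto
    qed
    moreover have "start y \<in> ap_window n r L d"
      unfolding ap_window_def grid_def
    proof (intro CollectI conjI allI impI)
      fix i assume "i < r"
      then show "start y i \<in> {1..n}" "start y i + (L - 1) * d i \<le> n"
        using jd[of i] I_bounds[OF \<open>y \<in> I\<close> \<open>i < r\<close>] unfolding start_def by auto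
    next
      fix i assume "r \<le> i"
      then show "start y i = 0" using I_zero[OF \<open>y \<in> I\<close>] unfolding start_def by auto
    qed
    ultimately show "z \<in> {x \<in> ap_window n r L d. ap_point x d j \<in> T}"
      using \<open>y \<in> T\<close> \<open>z = start y\<close> by auto
  qed
  moreover have "inj_on start (T \<inter> I)"
  proof (rule inj_onI, rule ext)
    fix y y' i assume "y \<in> T \<inter> I" "y' \<in> T \<inter> I" "start y = start y'"
    then show "y i = y' i"
      using fun_cong[of "start y" "start y'" i] jd[of i] I_bounds[of y i] I_bounds[of y' i]
        I_zero[of y i] I_zero[of y' i] unfolding start_def by (cases "i < r") auto
  qed
  moreover have "finite (ap_window n r L d)"
    unfolding ap_window_def by (rule finite_subset[OF _ finite_grid]) auto
  ultimately show ?thesis unfolding I_def by (intro card_inj_on_le) auto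
qed

lemma card_large_values:
  fixes c :: "'a \<Rightarrow> nat"
  assumes "finite V" and "\<And>x. x \<in> V \<Longrightarrow> c x \<le> L" and "L * A \<le> (\<Sum>x\<in>V. c x)"
  shows "L * A \<le> r * card V + L * card {x \<in> V. r \<le> c x}"
proof -
  define G where "G = {x \<in> V. r \<le> c x}"
  have "(\<Sum>x\<in>V. c x) = (\<Sum>x\<in>V - G. c x) + (\<Sum>x\<in>G. c x)"
    by (rule sum.subset_diff) (auto simp: G_def \<open>finite V\<close>)
  also have "\<dots> \<le> (\<Sum>x\<in>V - G. r) + (\<Sum>x\<in>G. L)"
    using assms(2) by (intro add_mono sum_mono) (auto simp: G_def)
  also have "\<dots> \<le> r * card V + L * card G"
    using card_mono[OF \<open>finite V\<close>, of "V - G"] by (simp add: mult.commute)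
  finally show ?thesis using assms(3) unfolding G_def by linarith
qed

lemma many_progressions_meet_dense_set:
  fixes n r L N :: nat
  assumes r: "r \<ge> 1" and L: "L = 40 * r" and nb: "40 * L * N * r \<le> n"
    and d: "d \<in> cube r {1..N}" and T: "T \<subseteq> grid n r" and cT: "real n ^ r / 10 \<le> real (card T)"
  shows "real n ^ r / 40 \<le> real (card (rich_starts n r L T d))"
proof -
  define V where "V = ap_window n r L d"
  define hits where "hits x = card {j \<in> {..<L}. ap_point x d j \<in> T}" for x
  define A where "A = card (T \<inter> cube r {L * N + 1..n - L * N})"
  define G where "G = {x \<in> V. r \<le> hits x}"
  have "N \<ge> 1" using d r unfolding cube_def by auto
  then have "0 < 40 * L * N * r" using r L by simp
  then have "n > 0" using nb by linarith
  have A: "real n ^ r / 20 \<le> real A"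
    unfolding A_def using nb by (intro dense_in_inner_cube[OF T cT \<open>n > 0\<close> _ r]) (simp add: ac_simps)
  have "finite V" unfolding V_def ap_window_def by (rule finite_subset[OF _ finite_grid]) auto
  have "L * A = (\<Sum>j<L. A)" by simp
  also have "\<dots> \<le> (\<Sum>j<L. card {x \<in> V. ap_point x d j \<in> T})"
    unfolding A_def V_def by (intro sum_mono card_dense_le_shifted[OF d]) auto
  also have "\<dots> = (\<Sum>j<L. \<Sum>x\<in>V. of_bool (ap_point x d j \<in> T))"
    using \<open>finite V\<close> by (simp add: Int_def)
  also have "\<dots> = (\<Sum>x\<in>V. \<Sum>j<L. of_bool (ap_point x d j \<in> T))" by (rule sum.swap)
  also have "\<dots> = (\<Sum>x\<in>V. hits x)" by (simp add: hits_def Int_def)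
  finally have sum_hits: "L * A \<le> (\<Sum>x\<in>V. hits x)" .
  have hits_le: "hits x \<le> L" if "x \<in> V" for x
  proof -
    have "hits x \<le> card {..<L}" unfolding hits_def by (rule card_mono) auto
    then show ?thesis by simp
  qed
  have "L * A \<le> r * card V + L * card G"
    unfolding G_def by (rule card_large_values[OF \<open>finite V\<close> hits_le sum_hits])
  moreover have "r * card V \<le> r * n ^ r"
    using card_mono[OF finite_grid, of V n r] unfolding V_def ap_window_def card_grid by auto
  ultimately have "L * A \<le> r * n ^ r + L * card G" by linarith
  then have "real (L * A) \<le> real (r * n ^ r + L * card G)" by (simp only: of_nat_le_iff)
  then have "real r * (40 * real A) \<le> real r * (real n ^ r + 40 * real (card G))"
    unfolding L by (simp add: algebra_simps)
  then have "40 * real A \<le> real n ^ r + 40 * real (card G)" using r by simp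
  moreover have "{j \<in> {..<L}. ap_point x d j \<in> T} = {j. j < L \<and> ap_point x d j \<in> T}" for x by auto
  ultimately show ?thesis using A unfolding G_def V_def hits_def rich_starts_def by simp
qed

section \<open>Counting coprime directions\<close>

lemma sum_inverse_squares_le: "N \<ge> 2 \<Longrightarrow> (\<Sum>q\<in>{2..N}. 1 / (real q)^2) \<le> 3/4 - 1 / real N"
proof (induction N rule: nat_induct_at_least)
  case base show ?case by simp
next
  case (Suc N)
  have N2: "real N \<ge> 2" using Suc.hyps by simp
  have "1 / (real N + 1)^2 \<le> 1 / (real N * (real N + 1))"
    by (rule divide_left_mono) (use N2 in \<open>auto simp: power2_eq_square\<close>)
  also have "\<dots> = 1 / real N - 1 / (real N + 1)" using N2 by (simp add: field_simps)
  finally have step: "1 / (real N + 1)^2 \<le> 1 / real N - 1 / (real N + 1)" .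
  have "(\<Sum>q\<in>{2..Suc N}. 1 / (real q)^2) = (\<Sum>q\<in>{2..N}. 1 / (real q)^2) + 1 / (real N + 1)^2"
    using Suc.hyps by (simp add: atLeastAtMostSuc_conv)
  also have "\<dots> \<le> 3/4 - 1 / (real N + 1)" using Suc.IH step by linarith
  also have "\<dots> = 3/4 - 1 / real (Suc N)" by simp
  finally show ?case .
qed

lemma card_multiples_le:
  assumes q: "q \<ge> 1" shows "real (card {a \<in> {1..N}. q dvd a}) \<le> real N / real q"
proof -
  have "card {a \<in> {1..N}. q dvd a} \<le> card {1..N div q}"
  proof (rule card_inj_on_le[of "\<lambda>a. a div q"])
    show "inj_on (\<lambda>a. a div q) {a \<in> {1..N}. q dvd a}"
      by (rule inj_onI) (auto elim!: dvdE simp: q)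
    show "(\<lambda>a. a div q) ` {a \<in> {1..N}. q dvd a} \<subseteq> {1..N div q}"
    proof
      fix k assume "k \<in> (\<lambda>a. a div q) ` {a \<in> {1..N}. q dvd a}"
      then obtain a where a: "a \<in> {1..N}" "q dvd a" "k = a div q" by auto
      then obtain c where c: "a = q * c" by (auto elim: dvdE)
      have "k = c" using a c q by simp
      moreover have "c \<ge> 1" using a c by (cases c) auto
      moreover have "c \<le> N div q" using a c q
        by (metis atLeastAtMost_iff div_le_mono nonzero_mult_div_cancel_left not_one_le_zero)
      ultimately show "k \<in> {1..N div q}" by simp
    qed
  qed simp
  then have "real (card {a \<in> {1..N}. q dvd a}) \<le> real (N div q)" by simp
  also have "\<dots> \<le> real N / real q" by (rule of_nat_div_le_of_nat)
  finally show ?thesis .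
qed

text \<open>A non-coprime pair has a common divisor q \<ge> 2; at most (N/q)^2 pairs share q, and
  \<Sum> 1/q^2 over q \<ge> 2 is below 3/4.\<close>
lemma card_coprime_pairs_ge:
  "real N ^ 2 / 4 \<le> real (card {(a, b) \<in> {1..N} \<times> {1..N}. coprime a b})"
proof -
  define Sq where "Sq = {1..N} \<times> {1..N}"
  define CP where "CP = {(a, b) \<in> Sq. coprime a b}"
  define Mq where "Mq q = {a \<in> {1..N}. q dvd a}" for q
  have "CP \<subseteq> Sq" unfolding CP_def by auto
  have bad: "Sq - CP \<subseteq> (\<Union>q\<in>{2..N}. Mq q \<times> Mq q)"
  proof clarify
    fix a b assume ab: "(a, b) \<in> Sq" "(a, b) \<notin> CP"
    define q where "q = gcd a b"
    have "q \<noteq> 1" "q > 0" "q \<le> a" using ab unfolding q_def CP_def Sq_def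
      by (auto simp: coprime_iff_gcd_eq_1 gcd_le1_nat)
    moreover have "q dvd a" "q dvd b" unfolding q_def by auto
    ultimately show "(a, b) \<in> (\<Union>q\<in>{2..N}. Mq q \<times> Mq q)"
      using ab unfolding Mq_def Sq_def by (intro UN_I[of q]) auto
  qed
  have "card (Sq - CP) \<le> (\<Sum>q\<in>{2..N}. card (Mq q \<times> Mq q))"
    by (rule order.trans[OF card_mono[OF _ bad] card_UN_le]) (auto simp: Mq_def)
  then have "real (card (Sq - CP)) \<le> real (\<Sum>q\<in>{2..N}. card (Mq q \<times> Mq q))"
    by (simp only: of_nat_le_iff)
  also have "\<dots> = (\<Sum>q\<in>{2..N}. real (card (Mq q)) ^ 2)"
    by (simp add: card_cartesian_product power2_eq_square)
  also have "\<dots> \<le> (\<Sum>q\<in>{2..N}. (real N / real q) ^ 2)"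
    unfolding Mq_def by (intro sum_mono power_mono card_multiples_le) auto
  also have "\<dots> = real N ^ 2 * (\<Sum>q\<in>{2..N}. 1 / (real q)^2)"
    by (simp add: sum_distrib_left power_divide)
  also have "\<dots> \<le> real N ^ 2 * (3/4)"
  proof (rule mult_left_mono)
    show "(\<Sum>q\<in>{2..N}. 1 / (real q)^2) \<le> 3/4"
    proof (cases "N \<ge> 2")
      case True
      have "0 \<le> 1 / real N" by simp
      then show ?thesis using sum_inverse_squares_le[OF True] by linarith
    qed simp
  qed simp
  finally have bad_le: "real (card (Sq - CP)) \<le> real N ^ 2 * (3/4)" .
  have "finite Sq" unfolding Sq_def by simp
  have "finite CP" using finite_subset[OF \<open>CP \<subseteq> Sq\<close> \<open>finite Sq\<close>] .
  have "card (Sq - CP) = card Sq - card CP" by (rule card_Diff_subset[OF \<open>finite CP\<close> \<open>CP \<subseteq> Sq\<close>])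
  moreover have "card CP \<le> card Sq" by (rule card_mono[OF \<open>finite Sq\<close> \<open>CP \<subseteq> Sq\<close>])
  moreover have "card Sq = N ^ 2" unfolding Sq_def by (simp add: power2_eq_square)
  ultimately have "real (card (Sq - CP)) = real N ^ 2 - real (card CP)" by (simp add: of_nat_diff)
  then have "real N ^ 2 / 4 \<le> real (card CP)" using bad_le by linarith
  then show ?thesis unfolding CP_def Sq_def .
qed

lemma card_coprime_directions_ge:
  assumes r: "r \<ge> 2"
  shows "real N ^ r / 4 \<le> real (card (coprime_directions N r))"
proof -
  define CP where "CP = {(a, b) \<in> {1..N} \<times> {1..N}. coprime a b}"
  define join where "join = (\<lambda>((a::nat, b::nat), e::nat \<Rightarrow> nat) i.
    if i = 0 then a else if i = 1 then b else e (i - 2))"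
  have "join ` (CP \<times> cube (r - 2) {1..N}) \<subseteq> coprime_directions N r"
    using r unfolding join_def CP_def coprime_directions_def cube_def by auto
  moreover have "inj_on join (CP \<times> cube (r - 2) {1..N})"
  proof (rule inj_onI)
    fix z z' assume "z \<in> CP \<times> cube (r - 2) {1..N}" "z' \<in> CP \<times> cube (r - 2) {1..N}"
      and eq: "join z = join z'"
    obtain a b e a' b' e' where z: "z = ((a, b), e)" "z' = ((a', b'), e')" by (metis prod.collapse)
    have "e = e'"
    proof
      fix i show "e i = e' i" using fun_cong[OF eq, of "i + 2"] z unfolding join_def by simp
    qed
    then show "z = z'"
      using fun_cong[OF eq, of 0] fun_cong[OF eq, of 1] z unfolding join_def by simp
  qed
  moreover have "finite (coprime_directions N r)" unfolding coprime_directions_def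
    by (rule finite_subset[OF _ finite_cube[of "{1..N}" r]]) auto
  ultimately have "card (CP \<times> cube (r - 2) {1..N}) \<le> card (coprime_directions N r)"
    by (intro card_inj_on_le)
  then have "real (card CP) * real N ^ (r - 2) \<le> real (card (coprime_directions N r))"
    by (simp add: card_cartesian_product card_cube) (metis of_nat_le_iff of_nat_mult of_nat_power)
  moreover have "real N ^ 2 / 4 * real N ^ (r - 2) \<le> real (card CP) * real N ^ (r - 2)"
    unfolding CP_def by (rule mult_right_mono[OF card_coprime_pairs_ge]) simp
  moreover have "real N ^ 2 * real N ^ (r - 2) = real N ^ r"
    using r by (metis le_add_diff_inverse power_add)
  ultimately show ?thesis by simp
qed

lemma induced_edges_ge_progressions:
  fixes n r L N :: nat
  assumes r: "r \<ge> 2" and L: "L = 40 * r" and nb: "40 * L * N * r \<le> n"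
    and T: "T \<subseteq> grid n r" and cT: "real n ^ r / 10 \<le> real (card T)"
  shows "real N ^ r * real n ^ r / (160 * real L) \<le> real (induced_edges n r T)"
proof -
  have fin_dirs: "finite (coprime_directions N r)" unfolding coprime_directions_def
    by (rule finite_subset[OF _ finite_cube[of "{1..N}" r]]) auto
  have "real N ^ r / 4 * (real n ^ r / 40) \<le> real (card (coprime_directions N r)) * (real n ^ r / 40)"
    by (rule mult_right_mono[OF card_coprime_directions_ge[OF r]]) simp
  also have "\<dots> = (\<Sum>d\<in>coprime_directions N r. real n ^ r / 40)" by simp
  also have "\<dots> \<le> (\<Sum>d\<in>coprime_directions N r. real (card (rich_starts n r L T d)))"
    using r L nb T cT
    by (intro sum_mono many_progressions_meet_dense_set) (auto simp: coprime_directions_def)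
  also have "\<dots> = real (card (SIGMA d:coprime_directions N r. rich_starts n r L T d))"
    using finite_rich_starts by (subst card_SigmaI[OF fin_dirs]) auto
  also have "\<dots> \<le> real L * real (induced_edges n r T)"
    using card_rich_pairs_le[OF r T, of N L] by (simp flip: of_nat_mult)
  finally show ?thesis using L r by (simp add: field_simps)
qed

section \<open>Numerical estimates\<close>

lemma sq_le_8_pow: "r \<ge> 8 \<Longrightarrow> 3200 * r^2 \<le> (8::nat) ^ r"
proof (induction r rule: nat_induct_at_least)
  case base show ?case by simp
next
  case (Suc r)
  have "8 * r \<le> r * r" using Suc.hyps by (intro mult_right_mono) auto
  moreover have "Suc r * Suc r = r * r + 2 * r + 1" by simp
  ultimately have "(Suc r)^2 \<le> 8 * r^2" unfolding power2_eq_square using Suc.hyps by linarith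
  then have "3200 * (Suc r)^2 \<le> 8 * (3200 * r^2)" by simp
  also have "\<dots> \<le> 8 * 8 ^ r" using Suc.IH by simp
  finally show ?case by simp
qed

lemma linear_le_10_pow: "r \<ge> 3 \<Longrightarrow> 64 * r \<le> (10::nat) ^ r"
proof (induction r rule: nat_induct_at_least)
  case base show ?case by simp
next
  case (Suc r)
  have "64 * Suc r \<le> 10 * (64 * r)" using Suc.hyps by simp
  also have "\<dots> \<le> 10 * 10 ^ r" using Suc.IH by simp
  finally show ?case by simp
qed

lemma sq_le_six_fifths_pow: "r \<ge> 200 \<Longrightarrow> (2000 * real r)^2 \<le> (6/5::real) ^ r"
proof (induction r rule: nat_induct_at_least)
  case base
  have a: "(2::real) \<le> (6/5)^5" by (simp add: power_divide)
  have "(2::real)^40 \<le> ((6/5)^5)^40" by (rule power_mono[OF a]) simp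
  also have "((6/5::real)^5)^40 = (6/5)^200" by (simp flip: power_mult)
  finally have "(2::real)^40 \<le> (6/5)^200" .
  moreover have "(2000 * real 200)^2 \<le> (2::real)^40" by simp
  ultimately show ?case by linarith
next
  case (Suc r)
  have r: "real r \<ge> 200" using Suc.hyps by simp
  have "(2000 * real (Suc r))^2 = (2000 * (real r + 1))^2" by simp
  also have "\<dots> = 2000^2 * (real r + 1)^2" by (rule power_mult_distrib)
  also have "\<dots> \<le> 2000^2 * (6/5 * (real r)^2)"
  proof (rule mult_left_mono)
    have "200 * real r \<le> real r * real r" using r by (intro mult_right_mono) auto
    then have "5 + real r * 10 \<le> real r * real r" using r by linarith
    then show "(real r + 1)^2 \<le> 6/5 * (real r)^2" unfolding power2_eq_square by (simp add: algebra_simps)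
  qed simp
  also have "\<dots> = 6/5 * (2000 * real r)^2" by (simp add: power_mult_distrib)
  also have "\<dots> \<le> 6/5 * (6/5) ^ r" using Suc.IH by simp
  finally show ?case by simp
qed

lemma powr_2_one_hundredth_le: "2 powr (1/100) \<le> (101/100::real)"
proof -
  have a: "(2::real) \<le> (101/100) ^ 100"
    using Bernoulli_inequality[of "1/100::real" 100] by simp
  have "(2::real) powr (1/100) \<le> ((101/100) ^ 100) powr (1/100)"
    by (rule powr_mono2) (use a in auto)
  also have "((101/100::real) ^ 100) powr (1/100) = 101/100"
  proof -
    have "((101/100::real) ^ 100) powr (1/100) = ((101/100) powr (real 100)) powr (1/100)"
      by (subst powr_realpow) auto
    also have "\<dots> = (101/100) powr (real 100 * (1/100))" by (rule powr_powr)
    also have "\<dots> = 101/100" by simp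
    finally show ?thesis .
  qed
  finally show ?thesis .
qed

lemma fact_Suc_le_power: "r \<ge> 1 \<Longrightarrow> fact (r + 1) \<le> (2 * real r) ^ (2 * r)"
proof -
  assume r: "r \<ge> 1"
  have "(fact (r + 1) :: real) \<le> real ((r + 1) ^ (r + 1))" by (rule fact_le_power)
  also have "\<dots> = (real r + 1) ^ (r + 1)" by (simp only: of_nat_power of_nat_add of_nat_1)
  also have "\<dots> \<le> (2 * real r) ^ (r + 1)" by (rule power_mono) (use r in auto)
  also have "\<dots> \<le> (2 * real r) ^ (2 * r)" by (rule power_increasing) (use r in auto)
  finally show ?thesis .
qed

lemma power_growth_le:
  assumes r: "r \<ge> 200"
  shows "6464 ^ r * (2 * real r) ^ (2 * r) \<le> (6/5) ^ (r^2)"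
proof -
  have "6464 ^ r * (2 * real r) ^ (2 * r) = 6464 ^ r * ((2 * real r)^2) ^ r" by (simp only: power_mult)
  also have "\<dots> \<le> (1000^2) ^ r * ((2 * real r)^2) ^ r" by (rule mult_right_mono[OF power_mono]) simp_all
  also have "\<dots> = (1000^2 * (2 * real r)^2) ^ r" by (rule power_mult_distrib[symmetric])
  also have "\<dots> = ((2000 * real r)^2) ^ r" by (simp add: power_mult_distrib)
  also have "\<dots> \<le> ((6/5) ^ r) ^ r" by (rule power_mono[OF sq_le_six_fifths_pow[OF r]]) simp
  also have "\<dots> = (6/5) ^ (r^2)" by (simp add: power_mult[symmetric] power2_eq_square)
  finally show ?thesis .
qed

lemma upper_constant_le:
  fixes l :: real and r :: nat
  assumes r: "r \<ge> 200" and l0: "0 \<le> l" and lb: "l \<le> (101/100)^r"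
  shows "8^r * l^(r+1) * 10^(r+2) * 2^(3*r^2 + 3*r) * fact (r+1) \<le> (10::real)^(r^2)"
proof -
  define c where "c = (101/100::real)"
  have P1: "l^(r+1) \<le> c^(r^2) * c^r"
  proof -
    have "l^(r+1) \<le> (c^r)^(r+1)" unfolding c_def by (rule power_mono[OF lb l0])
    also have "\<dots> = c^(r^2) * c^r" by (simp add: power2_eq_square power_mult[symmetric] power_add algebra_simps)
    finally show ?thesis .
  qed
  have P2: "fact (r+1) \<le> (2 * real r)^(2*r)" using fact_Suc_le_power r by simp
  have P3: "(2::real)^(3*r^2 + 3*r) = 8^(r^2) * 8^r"
    by (simp add: power_add power_mult)
  have P4: "(10::real)^(r+2) \<le> 10^r * 10^r"
  proof -
    have "(10::real)^2 \<le> 10^r" by (rule power_increasing) (use r in auto)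
    then show ?thesis by (simp add: power_add)
  qed
  have "8^r * l^(r+1) * 10^(r+2) * 2^(3*r^2 + 3*r) * fact (r+1)
      \<le> 8^r * (c^(r^2) * c^r) * (10^r * 10^r) * (8^(r^2) * 8^r) * (2 * real r)^(2*r)"
    unfolding P3 by (intro mult_mono P1 P2 P4 order_refl) (auto simp: c_def l0)
  also have "\<dots> = (8 * c)^(r^2) * ((8 * c * 10 * 10 * 8)^r * (2 * real r)^(2*r))"
  proof -
    have E1: "(8 * c * 10 * 10 * 8)^r = 8^r * c^r * 10^r * 10^r * 8^r" by (simp only: power_mult_distrib)
    have E2: "(8 * c)^(r^2) = 8^(r^2) * c^(r^2)" by (simp only: power_mult_distrib)
    have acl: "\<And>A B C D E F G H::real. A*(B*C)*(D*E)*(F*G)*H = (F*B)*((A*C*D*E*G)*H)"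
      by (simp add: ac_simps)
    show ?thesis unfolding E1 E2 by (rule acl)
  qed
  also have "\<dots> \<le> (8 * c)^(r^2) * (6/5)^(r^2)"
  proof (rule mult_left_mono)
    have "8 * c * 10 * 10 * 8 = (6464::real)" unfolding c_def by simp
    then show "(8 * c * 10 * 10 * 8)^r * (2 * real r)^(2*r) \<le> (6/5)^(r^2)"
      using power_growth_le[OF r] by (simp only:)
  qed (simp add: c_def)
  finally have "8^r * l^(r+1) * 10^(r+2) * 2^(3*r^2 + 3*r) * fact (r+1) \<le> (8 * c)^(r^2) * (6/5)^(r^2)" .
  also have "\<dots> = (8 * c * (6/5))^(r^2)" by (rule power_mult_distrib[symmetric])
  also have "\<dots> \<le> 10^(r^2)" unfolding c_def by (rule power_mono) auto
  finally show ?thesis .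
qed

text \<open>The left side is (2 q)^r (160 L) for q = 1600 r^2 and L = 40 r, the losses of the
  count along progressions.\<close>
lemma lower_constant_ge:
  fixes r :: nat and l :: real
  assumes r: "r \<ge> 8" and l: "l \<ge> 1"
  shows "(3200 * real r^2)^r * (6400 * real r) \<le> 10^(r+2) * 2^(3*r^2 + 3*r) * fact (r+1) * l"
proof -
  have a: "3200 * real r^2 \<le> 8^r"
  proof -
    have "real (3200 * r^2) \<le> real (8^r)" using sq_le_8_pow[OF r] by (simp only: of_nat_le_iff)
    then show ?thesis by simp
  qed
  have b: "6400 * real r \<le> 10^(r+2)"
  proof -
    have "real (64 * r) \<le> real (10^r)" using linear_le_10_pow[of r] r by (simp only: of_nat_le_iff)
    then have "64 * real r \<le> 10^r" by simp
    then show ?thesis by (simp add: power_add)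
  qed
  have "(3200 * real r^2)^r \<le> (8^r)^r" by (rule power_mono[OF a]) simp
  also have "((8::real)^r)^r = 8^(r^2)" by (simp add: power_mult[symmetric] power2_eq_square)
  also have "(8::real)^(r^2) \<le> 2^(3*r^2 + 3*r)"
  proof -
    have "(8::real)^(r^2) = 2^(3*r^2)" by (simp add: power_mult)
    also have "\<dots> \<le> 2^(3*r^2 + 3*r)" by (rule power_increasing) auto
    finally show ?thesis .
  qed
  finally have c: "(3200 * real r^2)^r \<le> 2^(3*r^2 + 3*r)" .
  have "(3200 * real r^2)^r * (6400 * real r) \<le> 2^(3*r^2 + 3*r) * 10^(r+2)"
    by (rule mult_mono[OF c b]) auto
  also have "\<dots> = 10^(r+2) * 2^(3*r^2 + 3*r) * 1 * 1" by simp
  also have "\<dots> \<le> 10^(r+2) * 2^(3*r^2 + 3*r) * fact (r+1) * l"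
  proof -
    have f1: "(1::real) \<le> fact (r+1)" by (rule fact_ge_1)
    show ?thesis by (intro mult_mono order_refl f1 l) auto
  qed
  finally show ?thesis .
qed

lemma log2_le_self: "n \<ge> 1 \<Longrightarrow> log 2 (real n) \<le> real n"
proof -
  assume n: "n \<ge> 1"
  have "real n \<le> 2 ^ n" using less_exp[of n] by (metis of_nat_le_iff of_nat_numeral of_nat_power less_imp_le)
  then have "log 2 (real n) \<le> log 2 (2 ^ n)" using n by (subst log_le_cancel_iff) auto
  also have "log 2 ((2::real) ^ n) = real n" by simp
  finally show ?thesis .
qed

section \<open>The stated range of parameters\<close>

definition bound_denominator :: "nat \<Rightarrow> nat \<Rightarrow> real" where
  "bound_denominator n r = 10 ^ (r + 2) * 2 ^ (3 * r^2 + 3 * r) * fact (r + 1) * log 2 n"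

lemma parameter_range:
  assumes n: "n \<ge> 16" and lo: "100 * log 2 (log 2 n) \<le> real r"
    and hi: "real r \<le> 0.01 * sqrt (log 2 n) / log 2 (log 2 n)"
  shows "r \<ge> 200" "40000 * (real r)^2 \<le> real n" "log 2 n \<le> (101/100) ^ r"
proof -
  define l where "l = log 2 (real n)"
  have l4: "l \<ge> 4" unfolding l_def using log2_ge_of_pow[of 4 n] n by simp
  then have LL2: "log 2 l \<ge> 2" using log2_ge_of_pow[of 2 l] by simp
  then show "r \<ge> 200" using lo unfolding l_def by linarith
  have "real r \<le> 0.01 * sqrt l / 2"
    using hi LL2 l4 divide_left_mono[of 2 "log 2 l" "0.01 * sqrt l"] unfolding l_def by force
  then have "(real r)^2 \<le> (0.01 * sqrt l / 2)^2" by (intro power_mono) auto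
  also have "\<dots> = l / 40000" using l4 by (simp add: power_divide power_mult_distrib)
  finally show "40000 * (real r)^2 \<le> real n"
    using log2_le_self[of n] n unfolding l_def by linarith
  have "l = 2 powr (log 2 l)" using l4 by simp
  also have "\<dots> \<le> 2 powr (real r / 100)" using lo unfolding l_def by (intro powr_mono) auto
  also have "\<dots> = (2 powr (1/100)) ^ r" by (simp add: powr_powr powr_realpow[symmetric])
  also have "\<dots> \<le> (101/100) ^ r" by (rule power_mono[OF powr_2_one_hundredth_le]) simp
  finally show "log 2 n \<le> (101/100) ^ r" unfolding l_def .
qed

lemma edge_bound_ge_fraction_of_edges:
  assumes r: "r \<ge> 200" and n: "n \<ge> 16" and l: "log 2 n \<le> (101/100) ^ r"
  shows "(1 / 10 ^ (r^2)) * real (card (Hedges n r)) \<le> real n ^ (2 * r) / bound_denominator n r"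
proof -
  have l4: "log 2 n \<ge> 4" using log2_ge_of_pow[of 4 n] n by simp
  have D: "bound_denominator n r > 0" unfolding bound_denominator_def using l4 by simp
  have "real (card (Hedges n r)) * bound_denominator n r
      \<le> 8 ^ r * (log 2 n) ^ r * real n ^ (2 * r) * bound_denominator n r"
    using card_Hedges_le_log[of r n] r n D by (intro mult_right_mono) auto
  also have "\<dots> = (8 ^ r * (log 2 n) ^ (r + 1) * 10 ^ (r + 2) * 2 ^ (3 * r^2 + 3 * r) * fact (r + 1))
      * real n ^ (2 * r)"
    unfolding bound_denominator_def by (simp add: ac_simps)
  also have "\<dots> \<le> 10 ^ (r^2) * real n ^ (2 * r)"
    using upper_constant_le[OF r _ l] l4 by (intro mult_right_mono) auto
  finally show ?thesis using D by (simp add: field_simps)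
qed

lemma induced_edges_ge_edge_bound:
  assumes r: "r \<ge> 8" and n: "40000 * (real r)^2 \<le> real n" "n \<ge> 16"
    and T: "T \<subseteq> grid n r" and cT: "0.1 * real n ^ r \<le> real (card T)"
  shows "real n ^ (2 * r) / bound_denominator n r \<le> real (induced_edges n r T)"
proof -
  define q where "q = 1600 * r^2"
  define N where "N = n div q"
  have rq: "real q = 1600 * (real r)^2" unfolding q_def by simp
  have "q > 0" unfolding q_def using r by simp
  have nq: "2 * real q \<le> real n" using n(1) rq by simp
  have "real n / (2 * real q) \<le> real N"
  proof -
    have "n < (N + 1) * q"
      unfolding N_def using dividend_less_times_div[OF \<open>q > 0\<close>, of n] by (simp add: algebra_simps)
    then have "real n < (real N + 1) * real q" by (metis of_nat_1 of_nat_add of_nat_less_iff of_nat_mult)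
    then have "real n / real q < real N + 1" using \<open>q > 0\<close> by (simp add: field_simps)
    moreover have "real n / real q \<ge> 2" using nq \<open>q > 0\<close> by (simp add: field_simps)
    ultimately show ?thesis by (simp add: field_simps)
  qed
  have "40 * (40 * r) * N * r = N * q" unfolding q_def power2_eq_square by (simp add: algebra_simps)
  moreover have "N * q \<le> n" unfolding N_def by simp
  ultimately have nb: "40 * (40 * r) * N * r \<le> n" by (simp only:)
  have l4: "log 2 n \<ge> 4" using log2_ge_of_pow[of 4 n] n by simp
  have "real n ^ (2 * r) / bound_denominator n r
      \<le> real n ^ (2 * r) / ((3200 * (real r)^2) ^ r * (6400 * real r))"
    unfolding bound_denominator_def using lower_constant_ge[OF r, of "log 2 n"] l4 r
    by (intro divide_left_mono) auto
  also have "\<dots> = (real n / (2 * real q)) ^ r * real n ^ r / (160 * real (40 * r))"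
    by (simp add: rq power_divide power_mult_distrib mult_2 power_add)
  also have "\<dots> \<le> real N ^ r * real n ^ r / (160 * real (40 * r))"
    by (intro divide_right_mono mult_right_mono power_mono \<open>real n / (2 * real q) \<le> real N\<close>) auto
  also have "\<dots> \<le> real (induced_edges n r T)"
    using r cT by (intro induced_edges_ge_progressions[OF _ refl nb T]) auto
  finally show ?thesis .
qed

theorem lemma6p1:
  "\<exists>K::real. \<exists>N0::nat. \<forall>n r :: nat. \<forall>T.
     n \<ge> N0 \<and>
     real r \<ge> K * log 2 (log 2 n) \<and>
     real r \<le> 0.01 * sqrt (log 2 n) / log 2 (log 2 n) \<and>
     T \<subseteq> grid n r \<and>
     real (card T) \<ge> 0.1 * real n ^ r
     \<longrightarrow>
     real (induced_edges n r T) \<ge>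
        real n ^ (2*r) / (10 ^ (r+2) * 2 ^ (3*r^2 + 3*r) * fact (r+1) * log 2 n)
     \<and> real n ^ (2*r) / (10 ^ (r+2) * 2 ^ (3*r^2 + 3*r) * fact (r+1) * log 2 n)
         \<ge> (1 / 10 ^ (r^2)) * real (card (Hedges n r))"
proof (intro exI[of _ "100::real"] exI[of _ "16::nat"] allI impI, elim conjE)
  fix n r :: nat and T
  assume n: "16 \<le> n" and "100 * log 2 (log 2 (real n)) \<le> real r"
    and "real r \<le> 0.01 * sqrt (log 2 (real n)) / log 2 (log 2 (real n))"
    and T: "T \<subseteq> grid n r" and cT: "0.1 * real n ^ r \<le> real (card T)"
  then have "r \<ge> 200" "40000 * (real r)^2 \<le> real n" "log 2 n \<le> (101/100) ^ r"
    using parameter_range by auto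
  then show "real n ^ (2*r) / (10 ^ (r+2) * 2 ^ (3*r^2 + 3*r) * fact (r+1) * log 2 n)
        \<le> real (induced_edges n r T)
      \<and> (1 / 10 ^ (r^2)) * real (card (Hedges n r))
        \<le> real n ^ (2*r) / (10 ^ (r+2) * 2 ^ (3*r^2 + 3*r) * fact (r+1) * log 2 n)"
    using induced_edges_ge_edge_bound[OF _ _ n T cT] edge_bound_ge_fraction_of_edges[OF _ n]
    unfolding bound_denominator_def by auto
qed

end
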